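(* Let $R$ be a power-serieswise Armendariz ring. Then the power series ring $R[[x]]$ is a generalized right Baer ring if and only if $R$ is a generalized right Baer ring.
   Context: All rings are associative with identity. For a nonempty subset $X$ of a ring $R$, $r_R(X)=\{a\in R : xa=0 \text{ for all } x\in X\}$, and for a positive integer $n$, $X^n$ denotes the set of all products $a_1\cdots a_n$ with $a_i\in X$. A ring $R$ is generalized right Baer if for every nonempty subset $X$ of $R$ there exist a positive integer $n$ (depending on $X$) and an idempotent $e\in R$ with $r_R(X^n)=eR$. A ring $R$ is power-serieswise Armendariz if whenever $f(x)=\sum_{i\ge0}a_ix^i$ and $g(x)=\sum_{j\ge0}b_jx^j$ in $R[[x]]$ satisfy $f(x)g(x)=0$, then $a_ib_j=0$ for all $i,j$. *)

theory Defs
  imports "HOL-Computational_Algebra.Formal_Power_Series"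
begin

definition r_ann :: "'a::ring_1 set \<Rightarrow> 'a set" where
  "r_ann X = {a. \<forall>x\<in>X. x * a = 0}"

text \<open>X^n: all products a_1 ... a_n with a_i in X (n \<ge> 1); set_pow X 0 is unused.\<close>
fun set_pow :: "'a::ring_1 set \<Rightarrow> nat \<Rightarrow> 'a set" where
  "set_pow X 0 = {1}"
| "set_pow X (Suc 0) = X"
| "set_pow X (Suc (Suc n)) = {y * x | y x. y \<in> set_pow X (Suc n) \<and> x \<in> X}"

definition gen_right_Baer :: "'a::ring_1 itself \<Rightarrow> bool" where
  "gen_right_Baer _ \<longleftrightarrow>
     (\<forall>X::'a set. X \<noteq> {} \<longrightarrow>
        (\<exists>n>0. \<exists>e::'a. e * e = e \<and> r_ann (set_pow X n) = {e * r | r. True}))"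

definition ps_Armendariz :: "'a::ring_1 itself \<Rightarrow> bool" where
  "ps_Armendariz _ \<longleftrightarrow>
     (\<forall>f g :: 'a fps. f * g = 0 \<longrightarrow> (\<forall>i j. fps_nth f i * fps_nth g j = 0))"

end

theory Submission
  imports Defs
begin

unbundle fps_syntax

text \<open>
  Going down, R embeds into R[[x]] as the constant series: if the annihilator of (c`X)^n is
  generated by an idempotent E, then that of X^n is generated by the constant coefficient of E.
  Going up, let C be the set of all coefficients of the series in F. Every coefficient of an element
  of F^n is a sum of products from C^n, and conversely the power-serieswise Armendariz property
  pushes annihilation of F^n down to C^n coefficientwise. Hence g annihilates F^n iff all
  coefficients of g annihilate C^n, so an idempotent e with r(C^n) = eR yields r(F^n) = e R[[x]].
\<close>

definition fps_coeffs :: "'a::zero fps set \<Rightarrow> 'a set" where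
  "fps_coeffs F = {f $ i | f i. f \<in> F}"

lemma fps_coeffs_nonempty: "F \<noteq> {} \<Longrightarrow> fps_coeffs F \<noteq> {}"
  unfolding fps_coeffs_def by blast

lemma idempotent_right_ideal_iff:
  fixes e :: "'a::semigroup_mult"
  assumes "e * e = e"
  shows "a \<in> {e * r | r. True} \<longleftrightarrow> e * a = a"
proof
  assume "a \<in> {e * r | r. True}"
  then obtain r where "a = e * r" by blast
  then show "e * a = a" using assms by (simp add: mult.assoc[symmetric])
qed (metis (mono_tags, lifting) mem_Collect_eq)

lemma idempotent_in_r_ann:
  assumes "e * e = e" and "r_ann S = {e * r | r. True}"
  shows "e \<in> r_ann S"
  unfolding assms(2) idempotent_right_ideal_iff[OF assms(1)] by (fact assms(1))

lemma set_pow_fps_const: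
  assumes "n > 0"
  shows "set_pow (fps_const ` (X::'a::ring_1 set)) n = fps_const ` set_pow X n"
proof -
  have "set_pow (fps_const ` X) (Suc k) = fps_const ` set_pow X (Suc k)" for k
  proof (induction k)
    case 0 then show ?case by simp
  next
    case (Suc k)
    show ?case
      unfolding set_pow.simps Suc by (auto simp: image_iff) (metis fps_const_mult)+
  qed
  then show ?thesis using assms gr0_implies_Suc by blast
qed

lemma fps_const_in_r_ann_iff:
  "fps_const a \<in> r_ann (fps_const ` S) \<longleftrightarrow> a \<in> r_ann (S::'a::ring_1 set)"
  unfolding r_ann_def by (auto simp: fps_eq_iff)

lemma set_pow_fps_nth_mult_eq_0:
  fixes F :: "'a::ring_1 fps set"
  assumes "P \<in> set_pow F (Suc m)" and "\<forall>c \<in> set_pow (fps_coeffs F) (Suc m). c * d = 0"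
  shows "P $ k * d = 0"
  using assms
proof (induction m arbitrary: P d k)
  case 0 then show ?case by (auto simp: fps_coeffs_def)
next
  case (Suc m)
  from Suc.prems(1) obtain Q f where Q: "Q \<in> set_pow F (Suc m)" "f \<in> F" "P = Q * f" by auto
  have "Q $ i * (f $ (k - i) * d) = 0" for i
  proof (rule Suc.IH[OF Q(1)], intro ballI)
    fix c assume "c \<in> set_pow (fps_coeffs F) (Suc m)"
    then have "c * f $ (k - i) \<in> set_pow (fps_coeffs F) (Suc (Suc m))"
      using Q(2) by (auto simp: fps_coeffs_def)
    then show "c * (f $ (k - i) * d) = 0" using Suc.prems(2) by (metis mult.assoc)
  qed
  then have "(\<Sum>i=0..k. Q $ i * f $ (k - i)) * d = 0"
    by (simp add: sum_distrib_right mult.assoc)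
  then show ?case using Q(3) by (simp add: fps_mult_nth)
qed

lemma set_pow_fps_coeffs_mult_nth_eq_0:
  fixes F :: "'a::ring_1 fps set"
  assumes arm: "ps_Armendariz TYPE('a)"
    and "c \<in> set_pow (fps_coeffs F) (Suc m)" and "\<forall>P \<in> set_pow F (Suc m). P * h = 0"
  shows "c * h $ j = 0"
  using assms(2,3)
proof (induction m arbitrary: c h j)
  case 0
  then obtain f i where "f \<in> F" "c = f $ i" by (auto simp: fps_coeffs_def)
  with 0 have "f * h = 0" by auto
  with arm show ?case unfolding ps_Armendariz_def using \<open>c = f $ i\<close> by blast
next
  case (Suc m)
  from Suc.prems(1) obtain c' f i
    where cf: "c' \<in> set_pow (fps_coeffs F) (Suc m)" "f \<in> F" "c = c' * f $ i"
    by (auto simp: fps_coeffs_def)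
  have "\<forall>P \<in> set_pow F (Suc m). P * (f * h) = 0"
  proof
    fix P assume "P \<in> set_pow F (Suc m)"
    then have "P * f \<in> set_pow F (Suc (Suc m))" using cf(2) by auto
    then show "P * (f * h) = 0" using Suc.prems(2) by (metis mult.assoc)
  qed
  then have "fps_const c' * (f * h) = 0"
    using Suc.IH[OF cf(1)] by (simp add: fps_eq_iff)
  then have "(fps_const c' * f) * h = 0" by (simp add: mult.assoc)
  with arm have "(fps_const c' * f) $ i * h $ j = 0" unfolding ps_Armendariz_def by blast
  then show ?case using cf(3) by (simp add: mult.assoc)
qed

lemma r_ann_set_pow_fps_iff:
  fixes F :: "'a::ring_1 fps set"
  assumes arm: "ps_Armendariz TYPE('a)" and "n > 0"
  shows "g \<in> r_ann (set_pow F n) \<longleftrightarrow> (\<forall>j. g $ j \<in> r_ann (set_pow (fps_coeffs F) n))"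
proof -
  obtain m where n: "n = Suc m" using \<open>n > 0\<close> gr0_implies_Suc by blast
  show ?thesis
  proof
    assume "g \<in> r_ann (set_pow F n)"
    then have "\<forall>P \<in> set_pow F (Suc m). P * g = 0" unfolding r_ann_def n by simp
    then show "\<forall>j. g $ j \<in> r_ann (set_pow (fps_coeffs F) n)"
      unfolding r_ann_def n using set_pow_fps_coeffs_mult_nth_eq_0[OF arm] by simp
  next
    assume "\<forall>j. g $ j \<in> r_ann (set_pow (fps_coeffs F) n)"
    then have coeffs: "\<forall>c \<in> set_pow (fps_coeffs F) (Suc m). c * g $ j = 0" for j
      unfolding r_ann_def n by simp
    have "(P * g) $ k = 0" if "P \<in> set_pow F n" for P k
    proof -
      have "P $ i * g $ (k - i) = 0" for i
        using set_pow_fps_nth_mult_eq_0[OF _ coeffs] that n by simp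
      then show ?thesis by (simp add: fps_mult_nth)
    qed
    then show "g \<in> r_ann (set_pow F n)" unfolding r_ann_def by (simp add: fps_eq_iff)
  qed
qed

lemma r_ann_set_pow_fps_eq:
  fixes F :: "'a::ring_1 fps set"
  assumes arm: "ps_Armendariz TYPE('a)" and "n > 0"
    and e: "e * e = e" "r_ann (set_pow (fps_coeffs F) n) = {e * r | r. True}"
  shows "r_ann (set_pow F n) = {fps_const e * g | g. True}"
proof (rule set_eqI)
  fix g :: "'a fps"
  have idem: "fps_const e * fps_const e = fps_const e" using e(1) by simp
  have "g \<in> r_ann (set_pow F n) \<longleftrightarrow> (\<forall>j. e * g $ j = g $ j)"
    unfolding r_ann_set_pow_fps_iff[OF arm \<open>n > 0\<close>] e(2) idempotent_right_ideal_iff[OF e(1)] ..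
  also have "\<dots> \<longleftrightarrow> fps_const e * g = g" by (simp add: fps_eq_iff)
  also have "\<dots> \<longleftrightarrow> g \<in> {fps_const e * g | g. True}"
    by (rule idempotent_right_ideal_iff[OF idem, symmetric])
  finally show "g \<in> r_ann (set_pow F n) \<longleftrightarrow> g \<in> {fps_const e * g | g. True}" .
qed

lemma r_ann_set_pow_fps_const_eq:
  fixes X :: "'a::ring_1 set"
  assumes "n > 0" and E: "E * E = E" "r_ann (set_pow (fps_const ` X) n) = {E * g | g. True}"
  shows "r_ann (set_pow X n) = {E $ 0 * r | r. True}"
proof (rule set_eqI)
  fix a
  have S: "set_pow (fps_const ` X) n = fps_const ` set_pow X n"
    using set_pow_fps_const[OF \<open>n > 0\<close>] .
  have "y * E $ 0 = 0" if "y \<in> set_pow X n" for y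
  proof -
    have "fps_const y \<in> set_pow (fps_const ` X) n" unfolding S using that by (rule imageI)
    then have "fps_const y * E = 0"
      using idempotent_in_r_ann[OF E] unfolding r_ann_def by simp
    then have "(fps_const y * E) $ 0 = 0" by simp
    then show ?thesis by simp
  qed
  then have "E $ 0 * r \<in> r_ann (set_pow X n)" for r
    unfolding r_ann_def by (simp add: mult.assoc[symmetric])
  moreover have "a \<in> {E $ 0 * r | r. True}" if "a \<in> r_ann (set_pow X n)"
  proof -
    have "fps_const a \<in> r_ann (set_pow (fps_const ` X) n)"
      unfolding S fps_const_in_r_ann_iff by (fact that)
    then obtain g where "fps_const a = E * g" unfolding E(2) by blast
    then have "fps_const a $ 0 = (E * g) $ 0" by (rule arg_cong)
    then have "a = E $ 0 * g $ 0" by simp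
    then show ?thesis by blast
  qed
  ultimately show "a \<in> r_ann (set_pow X n) \<longleftrightarrow> a \<in> {E $ 0 * r | r. True}" by blast
qed

lemma gen_right_Baer_fps_imp_gen_right_Baer:
  assumes "gen_right_Baer TYPE('a::ring_1 fps)"
  shows "gen_right_Baer TYPE('a)"
  unfolding gen_right_Baer_def
proof (intro allI impI)
  fix X :: "'a set" assume "X \<noteq> {}"
  then have "fps_const ` X \<noteq> {}" by simp
  from assms[unfolded gen_right_Baer_def, rule_format, OF this]
  obtain n E where n: "n > 0" and E: "E * E = E"
      "r_ann (set_pow (fps_const ` X) n) = {E * g | g. True}"
    by blast
  have "E $ 0 * E $ 0 = E $ 0" using arg_cong[OF E(1), of "\<lambda>f. f $ 0"] by simp
  then show "\<exists>n>0. \<exists>e. e * e = e \<and> r_ann (set_pow X n) = {e * r | r. True}"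
    using n r_ann_set_pow_fps_const_eq[OF n E] by (intro exI conjI)
qed

lemma gen_right_Baer_imp_gen_right_Baer_fps:
  assumes arm: "ps_Armendariz TYPE('a::ring_1)" and "gen_right_Baer TYPE('a)"
  shows "gen_right_Baer TYPE('a fps)"
  unfolding gen_right_Baer_def
proof (intro allI impI)
  fix F :: "'a fps set" assume "F \<noteq> {}"
  then have "fps_coeffs F \<noteq> {}" by (rule fps_coeffs_nonempty)
  from assms(2)[unfolded gen_right_Baer_def, rule_format, OF this]
  obtain n e where n: "n > 0" and e: "e * e = e"
      "r_ann (set_pow (fps_coeffs F) n) = {e * r | r. True}"
    by blast
  have "fps_const e * fps_const e = fps_const e" using e(1) by simp
  then show "\<exists>n>0. \<exists>E. E * E = E \<and> r_ann (set_pow F n) = {E * g | g. True}"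
    using n r_ann_set_pow_fps_eq[OF arm n e] by (intro exI conjI)
qed

theorem corollary3p10:
  assumes "ps_Armendariz TYPE('a::ring_1)"
  shows "gen_right_Baer TYPE('a fps) \<longleftrightarrow> gen_right_Baer TYPE('a)"
  using gen_right_Baer_fps_imp_gen_right_Baer gen_right_Baer_imp_gen_right_Baer_fps[OF assms] ..

end
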